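(* Let $N\ge 1$, $L\ge 1$, $M\ge 2$ be integers and let $\omega>0$, $\eta>0$. Let $\mathcal{C}_1,\dots,\mathcal{C}_L\in\mathbb{R}^{r_1\times\cdots\times r_{N+1}}$ be core tensors and, for each $d=1,\dots,N+1$, let $f_{\theta_d}:\mathbb{R}\to\mathbb{R}^{r_d}$ be a fully-connected neural network of depth $M$ with sine activation, i.e. $$f_{\theta_d}(x)=\mathbf{W}^{d}_M\,\sigma\big(\mathbf{W}^{d}_{M-1}\,\sigma(\cdots\sigma(\mathbf{W}^{d}_1 x)\cdots)\big),$$ where $\mathbf{W}^d_1\in\mathbb{R}^{m^d_1\times 1}$, $\mathbf{W}^d_k\in\mathbb{R}^{m^d_k\times m^d_{k-1}}$, $\mathbf{W}^d_M\in\mathbb{R}^{r_d\times m^d_{M-1}}$, and $\sigma(t)=\sin(\omega t)$ is applied entrywise. Assume $\|\mathcal{C}_l\|_{\ell_1}\le\eta$ for all $l$ and $\|\mathbf{W}^d_k\|_{\ell_1}\le\eta$ for all $d,k$. For $l=1,\dots,L$ define $s_l:\mathbb{R}^{N+1}\to\mathbb{R}$ by $$s_l(\mathbf{v})=\mathcal{C}_l\times_1 f_{\theta_1}(\mathbf{v}_{(1)})\times_2\cdots\times_{N+1} f_{\theta_{N+1}}(\mathbf{v}_{(N+1)}).$$ Then for any $l_1,l_2\in\{1,\dots,L\}$, any $d\in\{1,\dots,N+1\}$, and any real numbers $v_1,\dots,v_{d-1},v_d',v_d'',v_{d+1},\dots,v_{N+1}$, $$|s_{l_1}(v_1,\dots,v_{d-1},v_d',v_{d+1},\dots,v_{N+1})-s_{l_2}(v_1,\dots,v_{d-1},v_d'',v_{d+1},\dots,v_{N+1})|\le\delta_1|v_d'-v_d''|+\delta_2,$$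 where $\xi=\max\{|v_1|,\dots,|v_{d-1}|,|v_d'|,|v_d''|,|v_{d+1}|,\dots,|v_{N+1}|\}$, $\delta_1=\eta^{MN+M+1}\omega^{(M-1)(N+1)}\xi^{N}$ and $\delta_2=2\eta^{MN+M+1}\omega^{(M-1)(N+1)}\xi^{N+1}$. Moreover, when $l_1=l_2$ the bound holds with $\delta_2$ removed, i.e. the left-hand side is at most $\delta_1|v_d'-v_d''|$.
   Context: For a vector $\mathbf{v}$, $\mathbf{v}_{(d)}$ denotes its $d$-th entry. The $\ell_1$-norm of a tensor or matrix is the sum of absolute values of all its entries: $\|\mathcal{X}\|_{\ell_1}=\sum_{i_1,\dots,i_K}|\mathcal{X}_{(i_1,\dots,i_K)}|$. For $\mathcal{X}\in\mathbb{R}^{n_1\times\cdots\times n_K}$, $\mathbf{X}^{(d)}=\mathrm{unfold}_d(\mathcal{X})\in\mathbb{R}^{n_d\times\prod_{j\ne d}n_j}$ is the mode-$d$ unfolding and $\mathrm{fold}_d$ its inverse; the mode-$d$ product with $\mathbf{A}\in\mathbb{R}^{m\times n_d}$ is $\mathcal{X}\times_d\mathbf{A}=\mathrm{fold}_d(\mathbf{A}\mathbf{X}^{(d)})$. A vector $\mathbf{a}\in\mathbb{R}^{r_d}$ used in a mode-$d$ product is treated as the $1\times r_d$ matrix $\mathbf{a}^\top$, so that $\mathcal{C}_l\times_1 f_{\theta_1}(\cdot)\times_2\cdots\times_{N+1}f_{\theta_{N+1}}(\cdot)$ is a scalar. *)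

theory Defs
  imports Complex_Main "HOL-Library.FuncSet"
begin

(* Vectors are functions nat => real (entries 0..len-1), matrices are
   functions nat => nat => real (entry (i,j), i < rows, j < cols).
   A depth-M network for mode d has weights W k (k = 1..M) and layer
   widths m 0 = 1 (scalar input), m 1, ..., m (M-1), m M = r_d;
   W k is an (m k) x (m (k-1)) matrix. *)

definition mat_l1 :: "(nat \<Rightarrow> nat \<Rightarrow> real) \<Rightarrow> nat \<Rightarrow> nat \<Rightarrow> real" where
  "mat_l1 A p q = (\<Sum>i<p. \<Sum>j<q. \<bar>A i j\<bar>)"

fun sine_hidden :: "real \<Rightarrow> (nat \<Rightarrow> nat \<Rightarrow> nat \<Rightarrow> real) \<Rightarrow> (nat \<Rightarrow> nat) \<Rightarrow> nat \<Rightarrow> real \<Rightarrow> nat \<Rightarrow> real" where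
  "sine_hidden \<omega> W m 0 x = (\<lambda>i. if i = 0 then x else 0)"
| "sine_hidden \<omega> W m (Suc k) x =
     (\<lambda>i. if i < m (Suc k)
          then sin (\<omega> * (\<Sum>j<m k. W (Suc k) i j * sine_hidden \<omega> W m k x j)) else 0)"

definition sine_net :: "real \<Rightarrow> (nat \<Rightarrow> nat \<Rightarrow> nat \<Rightarrow> real) \<Rightarrow> (nat \<Rightarrow> nat) \<Rightarrow> nat \<Rightarrow> real \<Rightarrow> nat \<Rightarrow> real" where
  "sine_net \<omega> W m M x =
     (\<lambda>i. if i < m M then (\<Sum>j<m (M - 1). W M i j * sine_hidden \<omega> W m (M - 1) x j) else 0)"

(* Tensors of order n with mode sizes r 1, ..., r n: functions on multi-indices
   iota with iota d < r d for d in {1..n}. *)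
definition tensor_indices :: "nat \<Rightarrow> (nat \<Rightarrow> nat) \<Rightarrow> (nat \<Rightarrow> nat) set" where
  "tensor_indices n r = PiE {1..n} (\<lambda>d. {..<r d})"

definition tensor_l1 :: "nat \<Rightarrow> (nat \<Rightarrow> nat) \<Rightarrow> ((nat \<Rightarrow> nat) \<Rightarrow> real) \<Rightarrow> real" where
  "tensor_l1 n r C = (\<Sum>\<iota>\<in>tensor_indices n r. \<bar>C \<iota>\<bar>)"

definition full_mode_product :: "nat \<Rightarrow> (nat \<Rightarrow> nat) \<Rightarrow> ((nat \<Rightarrow> nat) \<Rightarrow> real) \<Rightarrow> (nat \<Rightarrow> nat \<Rightarrow> real) \<Rightarrow> real" where
  "full_mode_product n r C a = (\<Sum>\<iota>\<in>tensor_indices n r. C \<iota> * (\<Prod>d\<in>{1..n}. a d (\<iota> d)))"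

definition s_fun :: "nat \<Rightarrow> (nat \<Rightarrow> nat) \<Rightarrow> ((nat \<Rightarrow> nat) \<Rightarrow> real) \<Rightarrow> real
     \<Rightarrow> (nat \<Rightarrow> nat \<Rightarrow> nat \<Rightarrow> nat \<Rightarrow> real) \<Rightarrow> (nat \<Rightarrow> nat \<Rightarrow> nat) \<Rightarrow> nat \<Rightarrow> (nat \<Rightarrow> real) \<Rightarrow> real" where
  "s_fun N r C \<omega> W m M v =
     full_mode_product (N + 1) r C (\<lambda>d. sine_net \<omega> (W d) (m d) M (v d))"

end

theory Submission
  imports Defs
begin

text \<open>Since \<open>sin\<close> is 1-Lipschitz and vanishes at 0, and every weight matrix has
  \<open>\<ell>\<^sub>1\<close>-norm at most \<open>\<eta>\<close>, each hidden layer multiplies the Lipschitz constant by \<open>\<omega>\<eta>\<close>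
  and still vanishes at input 0; hence each network is \<open>\<eta>\<^sup>M \<omega>\<^sup>M\<^sup>-\<^sup>1\<close>-Lipschitz and bounded
  by \<open>\<eta>\<^sup>M \<omega>\<^sup>M\<^sup>-\<^sup>1 |x|\<close>. The value \<open>s\<^sub>l\<close> is multilinear in the network outputs with
  coefficients of total mass at most \<open>\<eta>\<close>, so changing one mode costs \<open>\<eta>\<close> times that mode's
  Lipschitz bound times the size bounds of the other \<open>N\<close> modes. For two different cores one
  just bounds both values by \<open>\<eta> (\<eta>\<^sup>M \<omega>\<^sup>M\<^sup>-\<^sup>1 \<xi>)\<^sup>N\<^sup>+\<^sup>1\<close>.\<close>

lemma abs_sin_diff_le: "\<bar>sin (w::real) - sin z\<bar> \<le> \<bar>w - z\<bar>"
proof -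
  have "\<bar>sin w - sin z\<bar> = 2 * \<bar>sin ((w - z) / 2)\<bar> * \<bar>cos ((w + z) / 2)\<bar>"
    by (simp add: sin_diff_sin abs_mult)
  also have "\<dots> \<le> 2 * \<bar>(w - z) / 2\<bar> * 1"
    by (intro mult_mono abs_sin_x_le_abs_x) auto
  finally show ?thesis by simp
qed

lemma abs_mat_row_sum_le:
  assumes "i < p" and "mat_l1 A p q \<le> \<eta>"
    and "\<And>j. j < q \<Longrightarrow> \<bar>x j\<bar> \<le> B" and "0 \<le> B"
  shows "\<bar>\<Sum>j<q. A i j * x j\<bar> \<le> \<eta> * B"
proof -
  have row: "(\<Sum>j<q. \<bar>A i j\<bar>) \<le> \<eta>"
    using assms(2) member_le_sum[of i "{..<p}" "\<lambda>i. \<Sum>j<q. \<bar>A i j\<bar>"] assms(1)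
    by (simp add: mat_l1_def sum_nonneg)
  have "\<bar>\<Sum>j<q. A i j * x j\<bar> \<le> (\<Sum>j<q. \<bar>A i j\<bar> * B)"
    by (rule order_trans[OF sum_abs], rule sum_mono) (simp add: abs_mult mult_left_mono assms(3))
  also have "\<dots> = (\<Sum>j<q. \<bar>A i j\<bar>) * B"
    by (simp add: sum_distrib_right)
  also have "\<dots> \<le> \<eta> * B"
    using row assms(4) by (rule mult_right_mono)
  finally show ?thesis .
qed

lemma sine_hidden_at_zero: "sine_hidden \<omega> W m k 0 i = 0"
  by (induction k arbitrary: i) simp_all

lemma sine_net_at_zero: "sine_net \<omega> W m M 0 i = 0"
  by (simp add: sine_net_def sine_hidden_at_zero)

lemma sine_hidden_lipschitz:
  assumes "0 \<le> \<omega>" "0 \<le> \<eta>"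
    and weights: "\<And>k. k \<in> {1..n} \<Longrightarrow> mat_l1 (W k) (m k) (m (k - 1)) \<le> \<eta>"
    and "k \<le> n"
  shows "\<bar>sine_hidden \<omega> W m k x i - sine_hidden \<omega> W m k y i\<bar> \<le> (\<omega> * \<eta>) ^ k * \<bar>x - y\<bar>"
  using \<open>k \<le> n\<close>
proof (induction k arbitrary: i)
  case 0
  then show ?case by simp
next
  case (Suc k)
  show ?case
  proof (cases "i < m (Suc k)")
    case True
    let ?h = "\<lambda>z j. sine_hidden \<omega> W m k z j"
    have "\<bar>(\<Sum>j<m k. W (Suc k) i j * ?h x j) - (\<Sum>j<m k. W (Suc k) i j * ?h y j)\<bar>
          = \<bar>\<Sum>j<m k. W (Suc k) i j * (?h x j - ?h y j)\<bar>"
      by (simp add: sum_subtractf right_diff_distrib)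
    also have "\<dots> \<le> \<eta> * ((\<omega> * \<eta>) ^ k * \<bar>x - y\<bar>)"
      using True Suc assms weights[of "Suc k"] by (intro abs_mat_row_sum_le) auto
    finally have linear_part:
      "\<bar>(\<Sum>j<m k. W (Suc k) i j * ?h x j) - (\<Sum>j<m k. W (Suc k) i j * ?h y j)\<bar>
         \<le> \<eta> * ((\<omega> * \<eta>) ^ k * \<bar>x - y\<bar>)" .
    have "\<bar>sine_hidden \<omega> W m (Suc k) x i - sine_hidden \<omega> W m (Suc k) y i\<bar>
          \<le> \<bar>\<omega> * (\<Sum>j<m k. W (Suc k) i j * ?h x j) - \<omega> * (\<Sum>j<m k. W (Suc k) i j * ?h y j)\<bar>"
      using True by (simp add: abs_sin_diff_le)
    also have "\<dots> = \<omega> * \<bar>(\<Sum>j<m k. W (Suc k) i j * ?h x j) - (\<Sum>j<m k. W (Suc k) i j * ?h y j)\<bar>"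
      using \<open>0 \<le> \<omega>\<close> by (simp add: abs_mult flip: right_diff_distrib)
    also have "\<dots> \<le> \<omega> * (\<eta> * ((\<omega> * \<eta>) ^ k * \<bar>x - y\<bar>))"
      using linear_part \<open>0 \<le> \<omega>\<close> by (rule mult_left_mono)
    finally show ?thesis by (simp add: algebra_simps)
  qed (simp add: assms)
qed

lemma sine_net_lipschitz:
  assumes "0 \<le> \<omega>" "0 \<le> \<eta>" "1 \<le> M"
    and weights: "\<And>k. k \<in> {1..M} \<Longrightarrow> mat_l1 (W k) (m k) (m (k - 1)) \<le> \<eta>"
  shows "\<bar>sine_net \<omega> W m M x i - sine_net \<omega> W m M y i\<bar> \<le> \<eta> ^ M * \<omega> ^ (M - 1) * \<bar>x - y\<bar>"
proof (cases "i < m M")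
  case True
  let ?h = "\<lambda>z j. sine_hidden \<omega> W m (M - 1) z j"
  have "\<bar>sine_net \<omega> W m M x i - sine_net \<omega> W m M y i\<bar> = \<bar>\<Sum>j<m (M - 1). W M i j * (?h x j - ?h y j)\<bar>"
    using True by (simp add: sine_net_def sum_subtractf right_diff_distrib)
  also have "\<dots> \<le> \<eta> * ((\<omega> * \<eta>) ^ (M - 1) * \<bar>x - y\<bar>)"
    using True assms sine_hidden_lipschitz[where n = M and W = W and m = m, OF assms(1,2) weights, of "M - 1"]
    by (intro abs_mat_row_sum_le) auto
  also have "\<dots> = \<eta> ^ M * \<omega> ^ (M - 1) * \<bar>x - y\<bar>"
    using \<open>1 \<le> M\<close> by (cases M) (simp_all add: power_mult_distrib)
  finally show ?thesis .
qed (simp add: sine_net_def assms)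

lemma sine_net_abs_le:
  assumes "0 \<le> \<omega>" "0 \<le> \<eta>" "1 \<le> M"
    and "\<And>k. k \<in> {1..M} \<Longrightarrow> mat_l1 (W k) (m k) (m (k - 1)) \<le> \<eta>"
  shows "\<bar>sine_net \<omega> W m M x i\<bar> \<le> \<eta> ^ M * \<omega> ^ (M - 1) * \<bar>x\<bar>"
  using sine_net_lipschitz[where W = W and m = m, OF assms, of x i 0] by (simp add: sine_net_at_zero)

lemma full_mode_product_abs_le:
  assumes "\<And>e j. e \<in> {1..n} \<Longrightarrow> \<bar>a e j\<bar> \<le> B"
  shows "\<bar>full_mode_product n r C a\<bar> \<le> tensor_l1 n r C * B ^ n"
proof -
  have "\<bar>full_mode_product n r C a\<bar> \<le> (\<Sum>\<iota>\<in>tensor_indices n r. \<bar>C \<iota>\<bar> * B ^ n)"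
    unfolding full_mode_product_def
  proof (rule order_trans[OF sum_abs], rule sum_mono)
    fix \<iota>
    have "\<bar>\<Prod>e\<in>{1..n}. a e (\<iota> e)\<bar> \<le> (\<Prod>e\<in>{1..n}. B)"
      unfolding abs_prod by (rule prod_mono) (use assms in auto)
    then show "\<bar>C \<iota> * (\<Prod>e\<in>{1..n}. a e (\<iota> e))\<bar> \<le> \<bar>C \<iota>\<bar> * B ^ n"
      by (simp add: abs_mult mult_left_mono)
  qed
  then show ?thesis by (simp add: tensor_l1_def sum_distrib_right)
qed

lemma full_mode_product_diff_le:
  assumes "d \<in> {1..n}" and same: "\<And>e. e \<in> {1..n} \<Longrightarrow> e \<noteq> d \<Longrightarrow> a e = b e"
    and bound: "\<And>e j. e \<in> {1..n} \<Longrightarrow> e \<noteq> d \<Longrightarrow> \<bar>a e j\<bar> \<le> B" and "0 \<le> B"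
    and diff: "\<And>j. \<bar>a d j - b d j\<bar> \<le> D"
  shows "\<bar>full_mode_product n r C a - full_mode_product n r C b\<bar> \<le> tensor_l1 n r C * B ^ (n - 1) * D"
proof -
  have "\<bar>full_mode_product n r C a - full_mode_product n r C b\<bar>
        \<le> (\<Sum>\<iota>\<in>tensor_indices n r. \<bar>C \<iota>\<bar> * (B ^ (n - 1) * D))"
    unfolding full_mode_product_def sum_subtractf[symmetric]
  proof (rule order_trans[OF sum_abs], rule sum_mono)
    fix \<iota>
    let ?rest = "\<Prod>e\<in>{1..n}-{d}. a e (\<iota> e)"
    have "(\<Prod>e\<in>{1..n}. a e (\<iota> e)) = a d (\<iota> d) * ?rest"
      and "(\<Prod>e\<in>{1..n}. b e (\<iota> e)) = b d (\<iota> d) * ?rest"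
      using assms(1) same by (simp_all add: prod.remove)
    then have "\<bar>C \<iota> * (\<Prod>e\<in>{1..n}. a e (\<iota> e)) - C \<iota> * (\<Prod>e\<in>{1..n}. b e (\<iota> e))\<bar>
               = \<bar>C \<iota>\<bar> * (\<bar>?rest\<bar> * \<bar>a d (\<iota> d) - b d (\<iota> d)\<bar>)"
      by (simp add: abs_mult algebra_simps flip: abs_mult)
    also have "\<dots> \<le> \<bar>C \<iota>\<bar> * (B ^ (n - 1) * D)"
    proof -
      have "\<bar>?rest\<bar> \<le> (\<Prod>e\<in>{1..n}-{d}. B)"
        unfolding abs_prod by (rule prod_mono) (use bound in auto)
      then have "\<bar>?rest\<bar> \<le> B ^ (n - 1)"
        using assms(1) by simp
      then show ?thesis
        by (intro mult_left_mono mult_mono diff) (use \<open>0 \<le> B\<close> in auto)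
    qed
    finally show "\<bar>C \<iota> * (\<Prod>e\<in>{1..n}. a e (\<iota> e)) - C \<iota> * (\<Prod>e\<in>{1..n}. b e (\<iota> e))\<bar>
                  \<le> \<bar>C \<iota>\<bar> * (B ^ (n - 1) * D)" .
  qed
  then show ?thesis by (simp add: tensor_l1_def sum_distrib_right mult.assoc)
qed

context
  fixes N M :: nat and \<omega> \<eta> :: real
    and W :: "nat \<Rightarrow> nat \<Rightarrow> nat \<Rightarrow> nat \<Rightarrow> real" and m :: "nat \<Rightarrow> nat \<Rightarrow> nat"
  assumes nonneg: "0 \<le> \<omega>" "0 \<le> \<eta>" and depth: "1 \<le> M"
    and weights: "\<And>e k. e \<in> {1..N+1} \<Longrightarrow> k \<in> {1..M} \<Longrightarrow> mat_l1 (W e k) (m e k) (m e (k - 1)) \<le> \<eta>"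
begin

lemma sine_net_mode_abs_le:
  assumes "e \<in> {1..N+1}" and "\<bar>x\<bar> \<le> \<xi>"
  shows "\<bar>sine_net \<omega> (W e) (m e) M x j\<bar> \<le> \<eta> ^ M * \<omega> ^ (M - 1) * \<xi>"
proof -
  have "\<bar>sine_net \<omega> (W e) (m e) M x j\<bar> \<le> \<eta> ^ M * \<omega> ^ (M - 1) * \<bar>x\<bar>"
    using assms(1) by (intro sine_net_abs_le nonneg depth weights)
  also have "\<dots> \<le> \<eta> ^ M * \<omega> ^ (M - 1) * \<xi>"
    using assms(2) nonneg by (intro mult_left_mono) auto
  finally show ?thesis .
qed

lemma s_fun_abs_le:
  assumes "tensor_l1 (N + 1) r C \<le> c" and "0 \<le> \<xi>" and "\<And>e. e \<in> {1..N+1} \<Longrightarrow> \<bar>u e\<bar> \<le> \<xi>"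
  shows "\<bar>s_fun N r C \<omega> W m M u\<bar> \<le> c * (\<eta> ^ M * \<omega> ^ (M - 1) * \<xi>) ^ (N + 1)"
proof -
  have "\<bar>s_fun N r C \<omega> W m M u\<bar> \<le> tensor_l1 (N + 1) r C * (\<eta> ^ M * \<omega> ^ (M - 1) * \<xi>) ^ (N + 1)"
    unfolding s_fun_def by (rule full_mode_product_abs_le) (intro sine_net_mode_abs_le assms(3))
  also have "\<dots> \<le> c * (\<eta> ^ M * \<omega> ^ (M - 1) * \<xi>) ^ (N + 1)"
    using assms(1,2) nonneg by (intro mult_right_mono) auto
  finally show ?thesis .
qed

lemma s_fun_update_diff_le:
  assumes "tensor_l1 (N + 1) r C \<le> c" and "d \<in> {1..N+1}" and "0 \<le> \<xi>"
    and "\<And>e. e \<in> {1..N+1} \<Longrightarrow> e \<noteq> d \<Longrightarrow> \<bar>v e\<bar> \<le> \<xi>"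
  shows "\<bar>s_fun N r C \<omega> W m M (v(d := a)) - s_fun N r C \<omega> W m M (v(d := b))\<bar>
         \<le> c * (\<eta> ^ M * \<omega> ^ (M - 1) * \<xi>) ^ N * (\<eta> ^ M * \<omega> ^ (M - 1)) * \<bar>a - b\<bar>"
proof -
  have "\<bar>sine_net \<omega> (W d) (m d) M a j - sine_net \<omega> (W d) (m d) M b j\<bar>
        \<le> \<eta> ^ M * \<omega> ^ (M - 1) * \<bar>a - b\<bar>" for j
    using assms(2) by (intro sine_net_lipschitz nonneg depth weights)
  moreover have "\<bar>sine_net \<omega> (W e) (m e) M (v e) j\<bar> \<le> \<eta> ^ M * \<omega> ^ (M - 1) * \<xi>"
    if "e \<in> {1..N+1}" "e \<noteq> d" for e j
    using that assms(4) by (intro sine_net_mode_abs_le)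
  ultimately have "\<bar>full_mode_product (N + 1) r C (\<lambda>e. sine_net \<omega> (W e) (m e) M ((v(d := a)) e))
              - full_mode_product (N + 1) r C (\<lambda>e. sine_net \<omega> (W e) (m e) M ((v(d := b)) e))\<bar>
        \<le> tensor_l1 (N + 1) r C * (\<eta> ^ M * \<omega> ^ (M - 1) * \<xi>) ^ (N + 1 - 1) * (\<eta> ^ M * \<omega> ^ (M - 1) * \<bar>a - b\<bar>)"
    using assms(3) nonneg by (intro full_mode_product_diff_le[OF assms(2)]) auto
  also have "\<dots> = tensor_l1 (N + 1) r C * (\<eta> ^ M * \<omega> ^ (M - 1) * \<xi>) ^ N * (\<eta> ^ M * \<omega> ^ (M - 1) * \<bar>a - b\<bar>)"
    by simp
  also have "\<dots> \<le> c * (\<eta> ^ M * \<omega> ^ (M - 1) * \<xi>) ^ N * (\<eta> ^ M * \<omega> ^ (M - 1) * \<bar>a - b\<bar>)"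
    using assms(1,3) nonneg by (intro mult_right_mono) auto
  finally show ?thesis by (simp add: s_fun_def mult.assoc)
qed

end

theorem lemma3:
  fixes N L M :: nat and \<omega> \<eta> :: real
    and r :: "nat \<Rightarrow> nat"
    and C :: "nat \<Rightarrow> (nat \<Rightarrow> nat) \<Rightarrow> real"
    and W :: "nat \<Rightarrow> nat \<Rightarrow> nat \<Rightarrow> nat \<Rightarrow> real"
    and m :: "nat \<Rightarrow> nat \<Rightarrow> nat"
    and l1 l2 d :: nat and v :: "nat \<Rightarrow> real" and a b :: real
  assumes "N \<ge> 1" and "L \<ge> 1" and "M \<ge> 2" and "\<omega> > 0" and "\<eta> > 0"
    and "\<And>e. e \<in> {1..N+1} \<Longrightarrow> m e 0 = 1"
    and "\<And>e. e \<in> {1..N+1} \<Longrightarrow> m e M = r e"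
    and "\<And>l. l \<in> {1..L} \<Longrightarrow> tensor_l1 (N + 1) r (C l) \<le> \<eta>"
    and "\<And>e k. e \<in> {1..N+1} \<Longrightarrow> k \<in> {1..M} \<Longrightarrow> mat_l1 (W e k) (m e k) (m e (k - 1)) \<le> \<eta>"
    and "l1 \<in> {1..L}" and "l2 \<in> {1..L}" and "d \<in> {1..N+1}"
  shows "let \<xi> = Max ({\<bar>a\<bar>, \<bar>b\<bar>} \<union> (\<lambda>j. \<bar>v j\<bar>) ` ({1..N+1} - {d}));
             \<delta>1 = \<eta> ^ (M * N + M + 1) * \<omega> ^ ((M - 1) * (N + 1)) * \<xi> ^ N;
             \<delta>2 = 2 * \<eta> ^ (M * N + M + 1) * \<omega> ^ ((M - 1) * (N + 1)) * \<xi> ^ (N + 1);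
             sa = s_fun N r (C l1) \<omega> W m M (v(d := a));
             sb = s_fun N r (C l2) \<omega> W m M (v(d := b))
         in \<bar>sa - sb\<bar> \<le> \<delta>1 * \<bar>a - b\<bar> + \<delta>2 \<and>
            (l1 = l2 \<longrightarrow> \<bar>sa - sb\<bar> \<le> \<delta>1 * \<bar>a - b\<bar>)"
proof -
  define \<xi> where "\<xi> = Max ({\<bar>a\<bar>, \<bar>b\<bar>} \<union> (\<lambda>j. \<bar>v j\<bar>) ` ({1..N+1} - {d}))"
  define K where "K = \<eta> ^ M * \<omega> ^ (M - 1)"
  have \<xi>: "\<bar>a\<bar> \<le> \<xi>" "\<bar>b\<bar> \<le> \<xi>" "\<And>e. e \<in> {1..N+1} \<Longrightarrow> e \<noteq> d \<Longrightarrow> \<bar>v e\<bar> \<le> \<xi>"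
    unfolding \<xi>_def by (simp_all add: Max_ge_iff le_max_iff_disj)
  have nonneg: "0 \<le> \<omega>" "0 \<le> \<eta>" "0 \<le> \<xi>" "0 \<le> K" and "1 \<le> M"
    using assms(3-5) \<xi>(1) by (auto simp: K_def)
  have \<omega>_power: "\<omega> ^ ((M - 1) * (N + 1)) = (\<omega> ^ (M - 1)) ^ N * \<omega> ^ (M - 1)"
    and \<eta>_power: "\<eta> ^ (M * N + M + 1) = \<eta> * (\<eta> ^ M) ^ N * \<eta> ^ M"
    by (simp_all only: power_mult power_add power_one_right ac_simps)
  have \<delta>1: "\<eta> ^ (M * N + M + 1) * \<omega> ^ ((M - 1) * (N + 1)) * \<xi> ^ N = \<eta> * (K * \<xi>) ^ N * K"
    and \<delta>2: "2 * \<eta> ^ (M * N + M + 1) * \<omega> ^ ((M - 1) * (N + 1)) * \<xi> ^ (N + 1) = 2 * (\<eta> * (K * \<xi>) ^ (N + 1))"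
    unfolding K_def \<omega>_power \<eta>_power by (simp_all only: power_mult_distrib power_add power_one_right mult_ac)
  \<comment> \<open>The width conventions \<open>m e 0 = 1\<close>, \<open>m e M = r e\<close> are not needed: entries beyond a
    layer's width are 0.\<close>
  have size: "\<bar>s_fun N r (C l) \<omega> W m M (v(d := c))\<bar> \<le> \<eta> * (K * \<xi>) ^ (N + 1)"
    if "l \<in> {1..L}" "\<bar>c\<bar> \<le> \<xi>" for l c
    unfolding K_def by (rule s_fun_abs_le) (use nonneg \<open>1 \<le> M\<close> assms(8,9) \<xi>(3) that in auto)
  have same_core: "\<bar>s_fun N r (C l1) \<omega> W m M (v(d := a)) - s_fun N r (C l1) \<omega> W m M (v(d := b))\<bar>
                   \<le> \<eta> * (K * \<xi>) ^ N * K * \<bar>a - b\<bar>"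
    unfolding K_def by (rule s_fun_update_diff_le) (use nonneg \<open>1 \<le> M\<close> assms(8-10,12) \<xi>(3) in auto)
  have "0 \<le> \<eta> * (K * \<xi>) ^ N * K * \<bar>a - b\<bar>"
    using nonneg by simp
  then show ?thesis
    unfolding Let_def \<xi>_def[symmetric] \<delta>1 \<delta>2
    using size[OF assms(10) \<xi>(1)] size[OF assms(11) \<xi>(2)] same_core by auto
qed

end
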